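(* Let $\theta\in[\frac{\pi}{2},\frac{2\pi}{3}]$ and $z=e^{i\theta}$, and let $D=\{\tau\in\mathbb{H}:|\operatorname{Re}\tau|\le\frac12,\ \operatorname{Im}\tau>\frac25\}$. If $\tau\in D$ and $\tau=\gamma.z$ for some $\gamma\in\mathrm{PSL}_2(\mathbb{Z})$ (acting by Möbius transformations), then $\tau\in\{z,\,-1/z,\,\frac{-1}{z+1},\,\frac{z}{z+1},\,\frac{-1}{z-1},\,\frac{-z}{z-1}\}$.
   Context: $\mathbb{H}$ is the upper half plane; $\begin{pmatrix}a&b\\c&d\end{pmatrix}\in\mathrm{PSL}_2(\mathbb{Z})$ acts by $\tau\mapsto\frac{a\tau+b}{c\tau+d}$. *)

theory Defs
  imports "HOL-Analysis.Analysis"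
begin

text \<open>Mobius action of an integer matrix (a b; c d) on the complex plane.
  An element of PSL_2(Z) is represented by a matrix of determinant 1;
  both lifts give the same action.\<close>
definition moebius_int :: "int \<Rightarrow> int \<Rightarrow> int \<Rightarrow> int \<Rightarrow> complex \<Rightarrow> complex" where
  "moebius_int a b c d \<tau> = (of_int a * \<tau> + of_int b) / (of_int c * \<tau> + of_int d)"

definition regionD :: "complex set" where
  "regionD = {\<tau>. Im \<tau> > 0 \<and> \<bar>Re \<tau>\<bar> \<le> 1/2 \<and> Im \<tau> > 2/5}"

end

theory Submission
  imports Defs
begin

(* For z on the unit circle with -1/2 <= Re z <= 0 and gamma = (a b; c d), we have
   Im (gamma z) = Im z / |cz + d|^2 and |cz + d|^2 = c^2 + 2cd Re z + d^2 >= c^2 - |cd| + d^2.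
   Im (gamma z) > 2/5 >= 2/5 Im z forces c^2 - |cd| + d^2 <= 2, hence |c|, |d| <= 1.
   Up to the sign of gamma, gamma z is then n + z or n - 1/(z + d) with n integer and
   d in {-1, 0, 1}; the real parts of z, -1/z, -1/(z+1), -1/(z-1) lie in [-1/2, 1/2], so
   |Re (gamma z)| <= 1/2 leaves n = 0 or a shift by +-1; the latter happens only on the
   boundary of the strip, i.e. for d = +-1 or for z = e^(2 pi i/3), and yields the
   remaining elements of the list. *)

lemma int_cases_if_abs_add_le_half:
  fixes n :: int and r :: real
  assumes "\<bar>r\<bar> \<le> 1/2" and "\<bar>n + r\<bar> \<le> 1/2"
  shows "n = 0 \<or> (n = 1 \<and> r = -1/2) \<or> (n = -1 \<and> r = 1/2)"
proof -
  have "-1 \<le> real_of_int n" "real_of_int n \<le> 1"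
    using assms unfolding abs_le_iff by linarith+
  then have "n \<in> {-1, 0, 1}" by auto
  then show ?thesis using assms unfolding abs_le_iff by auto
qed

lemma abs_le_1_if_form_le_2:
  fixes c d :: int
  assumes "c*c + d*d - \<bar>c*d\<bar> \<le> 2"
  shows "\<bar>c\<bar> \<le> 1"
proof (rule ccontr)
  assume "\<not> \<bar>c\<bar> \<le> 1"
  then have "2 * 2 \<le> \<bar>c\<bar> * \<bar>c\<bar>" by (intro mult_mono) auto
  then have "12 \<le> 3 * (\<bar>c\<bar> * \<bar>c\<bar>) + (\<bar>c\<bar> - 2 * \<bar>d\<bar>)\<^sup>2"
    using zero_le_power2[of "\<bar>c\<bar> - 2 * \<bar>d\<bar>"] by linarith
  also have "\<dots> = 4 * (c*c + d*d - \<bar>c*d\<bar>)"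
    by (simp add: power2_eq_square abs_mult algebra_simps)
  finally show False using assms by simp
qed

lemma moebius_int_minus: "moebius_int (-a) (-b) (-c) (-d) \<tau> = moebius_int a b c d \<tau>"
  using minus_divide_divide[of "of_int a * \<tau> + of_int b" "of_int c * \<tau> + of_int d"]
  by (simp add: moebius_int_def)

lemma Im_moebius_int:
  "Im (moebius_int a b c d \<tau>) = of_int (a*d - b*c) * Im \<tau> / (cmod (of_int c * \<tau> + of_int d))\<^sup>2"
  by (simp add: moebius_int_def Im_divide cmod_power2 algebra_simps)

lemma moebius_int_bottom_row_1:
  assumes "a*d - b = 1" and "\<tau> + of_int d \<noteq> 0"
  shows "moebius_int a b 1 d \<tau> = of_int a - 1 / (\<tau> + of_int d)"
proof -
  have "b = a*d - 1" using assms(1) by simp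
  then have "(of_int b :: complex) = of_int a * of_int d - 1" by simp
  then show ?thesis using assms(2) by (simp add: moebius_int_def field_simps)
qed

locale arc_i_omega =
  fixes z :: complex
  assumes norm_z: "cmod z = 1"
    and Re_ge: "-1/2 \<le> Re z" and Re_le: "Re z \<le> 0"
    and Im_pos: "0 < Im z"
begin

lemma Re_sq_add_Im_sq: "(Re z)\<^sup>2 + (Im z)\<^sup>2 = 1"
  using norm_z by (simp add: cmod_def)

lemma Im_le_1: "Im z \<le> 1"
  using abs_Im_le_cmod[of z] norm_z by simp

lemma add_int_nonzero: "z + of_int d \<noteq> 0"
  using Im_pos by (auto simp: complex_eq_iff)

lemma norm_linear_sq:
  "(cmod (of_int c * z + of_int d))\<^sup>2 = of_int c ^ 2 + 2 * of_int c * of_int d * Re z + of_int d ^ 2"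
proof -
  have "(cmod (of_int c * z + of_int d))\<^sup>2
      = of_int c ^ 2 * ((Re z)\<^sup>2 + (Im z)\<^sup>2) + 2 * of_int c * of_int d * Re z + of_int d ^ 2"
    unfolding cmod_power2 by (simp add: power2_eq_square algebra_simps)
  then show ?thesis using Re_sq_add_Im_sq by simp
qed

lemma form_le_norm_linear_sq:
  "real_of_int (c*c + d*d - \<bar>c*d\<bar>) \<le> (cmod (of_int c * z + of_int d))\<^sup>2"
proof -
  have "\<bar>2 * of_int c * of_int d * Re z\<bar> = real_of_int \<bar>c*d\<bar> * (2 * \<bar>Re z\<bar>)"
    by (simp add: abs_mult)
  also have "\<dots> \<le> real_of_int \<bar>c*d\<bar>"
    using Re_ge Re_le mult_left_mono[of "2 * \<bar>Re z\<bar>" 1 "real_of_int \<bar>c*d\<bar>"] by simp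
  finally show ?thesis unfolding norm_linear_sq by (simp add: power2_eq_square)
qed

lemma bottom_row_small:
  assumes det: "a*d - b*c = 1" and Im_gt: "2/5 < Im (moebius_int a b c d z)"
  shows "\<bar>c\<bar> \<le> 1" and "\<bar>d\<bar> \<le> 1"
proof -
  let ?N = "(cmod (of_int c * z + of_int d))\<^sup>2"
  have "0 < ?N" using add_int_nonzero[of d] Im_pos det
    by (cases "c = 0") (auto simp: complex_eq_iff)
  moreover have "2/5 < Im z / ?N" using Im_gt det by (simp add: Im_moebius_int)
  ultimately have "2 * ?N < 5 * Im z" by (simp add: field_simps)
  then have "real_of_int (c*c + d*d - \<bar>c*d\<bar>) < 5/2"
    using form_le_norm_linear_sq[of c d] Im_le_1 by linarith
  then have "c*c + d*d - \<bar>c*d\<bar> \<le> 2" by linarith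
  then show "\<bar>c\<bar> \<le> 1" and "\<bar>d\<bar> \<le> 1"
    using abs_le_1_if_form_le_2[of c d] abs_le_1_if_form_le_2[of d c]
    by (simp_all add: algebra_simps)
qed

lemma add_1_eq_neg_inverse_if_Re_eq_neg_half:
  assumes "Re z = -1/2"
  shows "1 + z = -1/z"
proof -
  have "(Im z)\<^sup>2 = 3/4" using Re_sq_add_Im_sq assms by (simp add: power2_eq_square)
  then have "z * (1 + z) = -1"
    using assms by (simp add: complex_eq_iff power2_eq_square algebra_simps)
  then show ?thesis using add_int_nonzero[of 0] by (simp add: field_simps)
qed

lemma Re_inverse: "Re (1 / z) = Re z"
  using Re_sq_add_Im_sq by (simp add: Re_divide)

lemma Re_inverse_add_1: "Re (1 / (z + 1)) = 1/2"
proof -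
  have "(Re z + 1)\<^sup>2 + (Im z)\<^sup>2 = 2 * (Re z + 1)"
    using Re_sq_add_Im_sq by (simp add: power2_eq_square algebra_simps)
  then show ?thesis using Re_ge by (simp add: Re_divide)
qed

lemma Re_inverse_diff_1: "Re (1 / (z - 1)) = -1/2"
proof -
  have "(Re z - 1)\<^sup>2 + (Im z)\<^sup>2 = -2 * (Re z - 1)"
    using Re_sq_add_Im_sq by (simp add: power2_eq_square algebra_simps)
  then show ?thesis using Re_le by (simp add: Re_divide field_simps)
qed

abbreviation reps :: "complex set" where
  "reps \<equiv> {z, -1/z, -1/(z+1), z/(z+1), -1/(z-1), -z/(z-1)}"

lemma int_add_in_reps:
  assumes "\<bar>Re (of_int n + z)\<bar> \<le> 1/2"
  shows "of_int n + z \<in> reps"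
proof -
  have "n = 0 \<or> (n = 1 \<and> Re z = -1/2)"
    using int_cases_if_abs_add_le_half[of "Re z" n] assms Re_ge Re_le by auto
  then show ?thesis using add_1_eq_neg_inverse_if_Re_eq_neg_half by auto
qed

lemma int_sub_inverse_in_reps:
  assumes d: "d \<in> {-1, 0, 1}" and near: "\<bar>Re (of_int n - 1 / (z + of_int d))\<bar> \<le> 1/2"
  shows "of_int n - 1 / (z + of_int d) \<in> reps"
  using d
proof (elim insertE emptyE)
  assume "d = 0"
  then have "n = 0 \<or> (n = -1 \<and> Re z = -1/2)"
    using int_cases_if_abs_add_le_half[of "- Re z" n] near Re_ge Re_le Re_inverse by auto
  moreover have "-1 - 1/z = z" if "Re z = -1/2"
  proof -
    have "1/z = -(1 + z)"
      using add_1_eq_neg_inverse_if_Re_eq_neg_half[OF that] by (simp add: equation_minus_iff)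
    then show ?thesis by simp
  qed
  ultimately show ?thesis using \<open>d = 0\<close> by auto
next
  assume "d = 1"
  then have "n = 0 \<or> n = 1"
    using int_cases_if_abs_add_le_half[of "-1/2" n] near Re_inverse_add_1 by auto
  moreover have "1 - 1/(z+1) = z/(z+1)"
    using add_int_nonzero[of 1] by (simp add: field_simps)
  ultimately show ?thesis using \<open>d = 1\<close> by auto
next
  assume "d = -1"
  then have "n = 0 \<or> n = -1"
    using int_cases_if_abs_add_le_half[of "1/2" n] near Re_inverse_diff_1 by auto
  moreover have "-1 - 1/(z-1) = -z/(z-1)"
    using add_int_nonzero[of "-1"] by (simp add: field_simps)
  ultimately show ?thesis using \<open>d = -1\<close> by auto
qed

lemma moebius_int_in_reps_if_bottom_row_positive:
  assumes det: "a*d - b*c = 1" and inD: "moebius_int a b c d z \<in> regionD"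
    and normal: "0 < c \<or> (c = 0 \<and> 0 < d)"
  shows "moebius_int a b c d z \<in> reps"
proof -
  have "\<bar>c\<bar> \<le> 1" "\<bar>d\<bar> \<le> 1"
    using bottom_row_small[OF det] inD by (auto simp: regionD_def)
  then consider "c = 0" "d = 1" | "c = 1" "d \<in> {-1, 0, 1}"
    using normal by fastforce
  then show ?thesis
  proof cases
    case 1
    then have "moebius_int a b c d z = of_int b + z"
      using det by (simp add: moebius_int_def)
    then show ?thesis using int_add_in_reps inD by (simp add: regionD_def)
  next
    case 2
    then have "moebius_int a b c d z = of_int a - 1 / (z + of_int d)"
      using moebius_int_bottom_row_1 det add_int_nonzero by simp
    then show ?thesis
      using int_sub_inverse_in_reps[OF \<open>d \<in> _\<close>] inD by (simp add: regionD_def)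
  qed
qed

lemma moebius_int_in_reps:
  assumes det: "a*d - b*c = 1" and inD: "moebius_int a b c d z \<in> regionD"
  shows "moebius_int a b c d z \<in> reps"
proof (cases "0 < c \<or> (c = 0 \<and> 0 < d)")
  case True
  then show ?thesis using moebius_int_in_reps_if_bottom_row_positive det inD by blast
next
  case False
  moreover have "d \<noteq> 0" if "c = 0" using det that by auto
  ultimately have "0 < -c \<or> (-c = 0 \<and> 0 < -d)" by auto
  then show ?thesis
    using moebius_int_in_reps_if_bottom_row_positive[of "-a" "-d" "-b" "-c"] det inD
    by (simp add: moebius_int_minus)
qed

end

lemma arc_i_omega_cis:
  assumes "pi/2 \<le> \<theta>" and "\<theta> \<le> 2*pi/3"
  shows "arc_i_omega (cis \<theta>)"
proof
  have "cos (2*pi/3) = -1/2"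
    using cos_pi_minus[of "pi/3"] by (simp add: cos_60 field_simps)
  then show "-1/2 \<le> Re (cis \<theta>)"
    using assms cos_mono_le_eq[of "2*pi/3" \<theta>] by simp
  show "Re (cis \<theta>) \<le> 0"
    using assms cos_mono_le_eq[of \<theta> "pi/2"] by simp
  show "0 < Im (cis \<theta>)"
    using assms pi_gt_zero by (simp, intro sin_gt_zero) linarith+
qed simp

theorem lemma3p8:
  fixes \<theta> :: real and z \<tau> :: complex
  assumes "pi / 2 \<le> \<theta>" and "\<theta> \<le> 2 * pi / 3"
    and "z = exp (\<i> * of_real \<theta>)"
    and "\<tau> \<in> regionD"
    and "\<exists>a b c d :: int. a * d - b * c = 1 \<and> \<tau> = moebius_int a b c d z"
  shows "\<tau> \<in> {z, -1/z, -1/(z+1), z/(z+1), -1/(z-1), -z/(z-1)}"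
proof -
  obtain a b c d :: int where "a * d - b * c = 1" and "\<tau> = moebius_int a b c d z"
    using assms(5) by blast
  moreover have "arc_i_omega z"
    using arc_i_omega_cis[OF assms(1,2)] assms(3) by (simp add: cis_conv_exp)
  ultimately show ?thesis
    using arc_i_omega.moebius_int_in_reps assms(4) by blast
qed

end
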